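(* Let $k$ be a field, $n\ge2$, $d\ge2$, and $\mathbf{m}\in\mathbb{N}^n$ with $|\mathbf{m}|=d$ and $\max(\mathbf{m})<d$. Let $P=\mathcal{P}_{n,d,\mathbf{m}}$ and $V=V_{n,d}$. Then the cokernel $C=V/P$ of the inclusion $P\subseteq V$ is a cyclic $P$-module generated by the class $x_1^{m_1}\cdots x_n^{m_n}+P$.
   Context: Let $S=k[x_1,\dots,x_n]$. $T_{n,d}=\{\mathbf{a}\in\mathbb{N}^n:|\mathbf{a}|=d\}$ with $|\mathbf{a}|=\sum a_i$, $\max(\mathbf{a})=\max_i a_i$. $V_{n,d}\subseteq S$ is the $k$-subalgebra generated by all monomials of degree $d$ (the $d$th Veronese subring); $\mathcal{P}_{n,d,\mathbf{m}}\subseteq S$ is the $k$-subalgebra generated by all degree-$d$ monomials except $x_1^{m_1}\cdots x_n^{m_n}$ (the pinched Veronese ring). *)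

theory Defs
  imports "HOL-Library.Poly_Mapping"
begin

text \<open>Polynomials over a field k: finitely supported maps from monomials (exponent vectors
  nat =>0 nat, variable x_(i+1) indexed by i) to coefficients.  The ring
  S = k[x_1..x_n] consists of those using only variables with index < n.\<close>

type_synonym 'a mpoly = "(nat \<Rightarrow>\<^sub>0 nat) \<Rightarrow>\<^sub>0 'a"

definition total_deg :: "(nat \<Rightarrow>\<^sub>0 nat) \<Rightarrow> nat" where
  "total_deg a = (\<Sum>i\<in>Poly_Mapping.keys a. Poly_Mapping.lookup a i)"

definition T :: "nat \<Rightarrow> nat \<Rightarrow> (nat \<Rightarrow>\<^sub>0 nat) set" where
  "T n d = {a. Poly_Mapping.keys a \<subseteq> {..<n} \<and> total_deg a = d}"

definition monom :: "(nat \<Rightarrow>\<^sub>0 nat) \<Rightarrow> 'a::field mpoly" where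
  "monom a = Poly_Mapping.single a 1"

inductive_set subalg :: "'a::field mpoly set \<Rightarrow> 'a mpoly set" for G where
  const: "Poly_Mapping.single 0 c \<in> subalg G"
| gen: "g \<in> G \<Longrightarrow> g \<in> subalg G"
| add: "p \<in> subalg G \<Longrightarrow> q \<in> subalg G \<Longrightarrow> p + q \<in> subalg G"
| mult: "p \<in> subalg G \<Longrightarrow> q \<in> subalg G \<Longrightarrow> p * q \<in> subalg G"

definition veronese :: "nat \<Rightarrow> nat \<Rightarrow> 'a::field mpoly set" where
  "veronese n d = subalg (monom ` T n d)"

definition pinched_veronese :: "nat \<Rightarrow> nat \<Rightarrow> (nat \<Rightarrow>\<^sub>0 nat) \<Rightarrow> 'a::field mpoly set" where
  "pinched_veronese n d m = subalg (monom ` (T n d - {m}))"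

end

theory Submission
  imports Defs
begin

text \<open>Write \<open>x\<^sup>m\<close> for the pinched monomial. Since no exponent of \<open>m\<close> reaches \<open>d\<close>, two distinct
  variables \<open>x\<^sub>i, x\<^sub>j\<close> divide \<open>x\<^sup>m\<close>, and \<open>(x\<^sup>m)\<^sup>2 = (x\<^sup>m x\<^sub>i / x\<^sub>j) (x\<^sup>m x\<^sub>j / x\<^sub>i)\<close> is a product of two
  generators of \<open>P\<close>. Hence \<open>P + P x\<^sup>m\<close> is closed under multiplication; it contains all generators
  of \<open>V\<close>, so it is all of \<open>V\<close>.\<close>

lemma subalg_mono: "G \<subseteq> H \<Longrightarrow> subalg G \<subseteq> subalg H"
proof
  fix x assume GH: "G \<subseteq> H" and "x \<in> subalg G"
  from this(2) show "x \<in> subalg H"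
    by (induction x rule: subalg.induct) (use GH in \<open>auto intro: subalg.intros\<close>)
qed

lemma subalg_zero: "0 \<in> subalg G"
  using subalg.const[of 0 G] by simp

lemma subalg_one: "1 \<in> subalg G"
  using subalg.const[of 1 G] by simp

lemma subalg_insert_square_decomp:
  assumes "g * g \<in> subalg G" and "v \<in> subalg (insert g G)"
  shows "\<exists>p\<in>subalg G. \<exists>q\<in>subalg G. v = p * g + q"
  using assms(2)
proof (induction rule: subalg.induct)
  case (const c)
  show ?case
    by (intro bexI[of _ 0] bexI[of _ "Poly_Mapping.single 0 c"]) (auto intro: subalg.const subalg_zero)
next
  case (gen h)
  then consider "h = g" | "h \<in> G"
    by blast
  then show ?case
  proof cases
    case 1
    then show ?thesis
      by (intro bexI[of _ 1] bexI[of _ 0]) (auto intro: subalg_one subalg_zero)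
  next
    case 2
    then show ?thesis
      by (intro bexI[of _ 0] bexI[of _ h]) (auto intro: subalg_zero subalg.gen)
  qed
next
  case (add v w)
  then obtain p1 q1 p2 q2 where "p1 \<in> subalg G" "q1 \<in> subalg G" "p2 \<in> subalg G" "q2 \<in> subalg G"
      "v = p1 * g + q1" "w = p2 * g + q2"
    by blast
  then show ?case
    by (intro bexI[of _ "p1 + p2"] bexI[of _ "q1 + q2"]) (auto simp: algebra_simps intro: subalg.add)
next
  case (mult v w)
  then obtain p1 q1 p2 q2 where pq: "p1 \<in> subalg G" "q1 \<in> subalg G" "p2 \<in> subalg G" "q2 \<in> subalg G"
      and v: "v = p1 * g + q1" and w: "w = p2 * g + q2"
    by blast
  have "v * w = (p1 * q2 + q1 * p2) * g + (p1 * p2 * (g * g) + q1 * q2)"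
    by (simp add: v w algebra_simps)
  with pq assms(1) show ?case
    by (intro bexI[of _ "p1 * q2 + q1 * p2"] bexI[of _ "p1 * p2 * (g * g) + q1 * q2"])
      (auto intro: subalg.add subalg.mult)
qed

lemma total_deg_eq_sum:
  assumes "finite S" "Poly_Mapping.keys a \<subseteq> S"
  shows "total_deg a = (\<Sum>i\<in>S. Poly_Mapping.lookup a i)"
  unfolding total_deg_def
  by (rule sum.mono_neutral_left) (use assms in \<open>auto simp: in_keys_iff\<close>)

lemma total_deg_add: "total_deg (a + b) = total_deg a + total_deg b"
proof -
  let ?S = "Poly_Mapping.keys a \<union> Poly_Mapping.keys b"
  have "total_deg (a + b) = (\<Sum>i\<in>?S. Poly_Mapping.lookup (a + b) i)"
    by (rule total_deg_eq_sum[OF _ keys_add]) simp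
  also have "\<dots> = (\<Sum>i\<in>?S. Poly_Mapping.lookup a i) + (\<Sum>i\<in>?S. Poly_Mapping.lookup b i)"
    by (simp add: lookup_add sum.distrib)
  also have "\<dots> = total_deg a + total_deg b"
    by (simp add: total_deg_eq_sum[of ?S a] total_deg_eq_sum[of ?S b])
  finally show ?thesis .
qed

lemma total_deg_single: "total_deg (Poly_Mapping.single i k) = k"
  unfolding total_deg_def by simp

lemma monom_mult: "(monom a :: 'a::field mpoly) * monom b = monom (a + b)"
  unfolding monom_def by (simp add: mult_single)

lemma two_keys_if_lookup_less_total_deg:
  assumes "\<forall>i. Poly_Mapping.lookup m i < total_deg m"
  obtains i j where "i \<in> Poly_Mapping.keys m" "j \<in> Poly_Mapping.keys m" "i \<noteq> j"
proof -
  obtain i where i: "i \<in> Poly_Mapping.keys m"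
    using assms by (fastforce simp: total_deg_def)
  have "Poly_Mapping.keys m \<noteq> {i}"
    using assms by (auto simp: total_deg_def)
  then obtain j where "j \<in> Poly_Mapping.keys m" "j \<noteq> i"
    using i by blast
  with i that show ?thesis by blast
qed

lemma T_square_exchange:
  assumes m: "m \<in> T n d"
    and ij: "i \<in> Poly_Mapping.keys m" "j \<in> Poly_Mapping.keys m" "i \<noteq> j"
  obtains a b where "a \<in> T n d - {m}" "b \<in> T n d - {m}" "a + b = m + m"
proof -
  define c where "c = m - Poly_Mapping.single i 1 - Poly_Mapping.single j 1"
  have keys_m: "Poly_Mapping.keys m \<subseteq> {..<n}" and deg_m: "total_deg m = d"
    using m by (auto simp: T_def)
  have "Poly_Mapping.lookup m i \<ge> 1" "Poly_Mapping.lookup m j \<ge> 1"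
    using ij by (auto simp: in_keys_iff)
  then have mc: "m = c + Poly_Mapping.single i 1 + Poly_Mapping.single j 1"
    by (intro poly_mapping_eqI) (use ij(3) in \<open>auto simp: c_def lookup_add lookup_minus lookup_single when_def\<close>)
  have keys_c: "Poly_Mapping.keys c \<subseteq> {..<n}"
  proof
    fix x assume "x \<in> Poly_Mapping.keys c"
    then have "x \<in> Poly_Mapping.keys m"
      by (auto simp: in_keys_iff mc lookup_add)
    then show "x \<in> {..<n}"
      using keys_m by auto
  qed
  have deg_c: "total_deg c + 2 = d"
    using deg_m by (simp add: mc total_deg_add total_deg_single)
  have exchange_in_T: "c + Poly_Mapping.single k 2 \<in> T n d - {m}"
    if k: "k \<in> Poly_Mapping.keys m" and lookup_k: "Poly_Mapping.lookup m k = Poly_Mapping.lookup c k + 1"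
    for k
  proof -
    have "Poly_Mapping.keys (c + Poly_Mapping.single k 2) \<subseteq> {..<n}"
      using keys_add[of c "Poly_Mapping.single k 2"] keys_c k keys_m by auto
    moreover have "c + Poly_Mapping.single k 2 \<noteq> m"
    proof
      assume "c + Poly_Mapping.single k 2 = m"
      then have "Poly_Mapping.lookup (c + Poly_Mapping.single k 2) k = Poly_Mapping.lookup m k"
        by simp
      with lookup_k show False
        by (simp add: lookup_add)
    qed
    ultimately show ?thesis
      using deg_c by (simp add: T_def total_deg_add total_deg_single)
  qed
  show ?thesis
  proof (rule that)
    show "c + Poly_Mapping.single i 2 \<in> T n d - {m}"
      by (rule exchange_in_T[OF ij(1)]) (use ij(3) in \<open>simp add: mc lookup_add lookup_single\<close>)
    show "c + Poly_Mapping.single j 2 \<in> T n d - {m}"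
      by (rule exchange_in_T[OF ij(2)]) (use ij(3) in \<open>simp add: mc lookup_add lookup_single\<close>)
    show "c + Poly_Mapping.single i 2 + (c + Poly_Mapping.single j 2) = m + m"
      by (rule poly_mapping_eqI) (simp add: mc lookup_add lookup_single when_def)
  qed
qed

lemma monom_square_in_pinched_veronese:
  assumes "m \<in> T n d" and "\<forall>i. Poly_Mapping.lookup m i < d"
  shows "(monom m :: 'a::field mpoly) * monom m \<in> pinched_veronese n d m"
proof -
  have "\<forall>i. Poly_Mapping.lookup m i < total_deg m"
    using assms by (simp add: T_def)
  then obtain i j where "i \<in> Poly_Mapping.keys m" "j \<in> Poly_Mapping.keys m" "i \<noteq> j"
    by (rule two_keys_if_lookup_less_total_deg)
  then obtain a b where ab: "a \<in> T n d - {m}" "b \<in> T n d - {m}" "a + b = m + m"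
    by (rule T_square_exchange[OF assms(1)])
  then have "(monom a :: 'a mpoly) * monom b \<in> pinched_veronese n d m"
    unfolding pinched_veronese_def by (intro subalg.mult subalg.gen) auto
  then show ?thesis
    by (simp add: monom_mult ab(3))
qed

lemma veronese_eq_subalg_insert:
  "m \<in> T n d \<Longrightarrow> veronese n d = subalg (insert (monom m) (monom ` (T n d - {m})))"
  unfolding veronese_def by (metis image_insert insert_Diff)

theorem corollary2p19:
  fixes n d :: nat and m :: "nat \<Rightarrow>\<^sub>0 nat"
  assumes "n \<ge> 2" and "d \<ge> 2"
    and "m \<in> T n d"
    and "\<forall>i. Poly_Mapping.lookup m i < d"
  shows "(pinched_veronese n d m :: 'a::field mpoly set) \<subseteq> veronese n d
    \<and> (\<forall>v \<in> (veronese n d :: 'a mpoly set).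
         \<exists>p \<in> pinched_veronese n d m. v - p * monom m \<in> pinched_veronese n d m)"
proof (intro conjI ballI)
  show "pinched_veronese n d m \<subseteq> (veronese n d :: 'a mpoly set)"
    unfolding pinched_veronese_def veronese_def by (rule subalg_mono) auto
next
  fix v :: "'a mpoly"
  assume "v \<in> veronese n d"
  then have "v \<in> subalg (insert (monom m) (monom ` (T n d - {m})))"
    unfolding veronese_eq_subalg_insert[OF assms(3)] .
  then obtain p q where "p \<in> pinched_veronese n d m" "q \<in> pinched_veronese n d m"
      "v = p * monom m + q"
    using subalg_insert_square_decomp monom_square_in_pinched_veronese[OF assms(3,4)]
    unfolding pinched_veronese_def by blast
  then show "\<exists>p \<in> pinched_veronese n d m. v - p * monom m \<in> pinched_veronese n d m"
    by (intro bexI[of _ p]) auto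
qed

end
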